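(* Let $\mathfrak{S}=(\mathcal{X},\mathsf{S},\gamma,(\Lambda_{a})_{a\in\mathcal{A}})$ be a spectral decomposition system for the Euclidean space $\mathfrak{H}$ with spectral-induced ordering mapping $\tau$, and let $x,y\in\mathcal{X}$. Then: (i) $\tau\circ\tau=\tau$; (ii) for every $a\in\mathcal{A}$, $\|\Lambda_ax\|=\|x\|=\|\tau(x)\|$; (iii) $\langle x,y\rangle\leq\langle\tau(x),\tau(y)\rangle$; (iv) $\langle\tau(x),\tau(y)\rangle=\max_{s\in\mathsf{S}}\langle s\cdot x,y\rangle$; (v) $\|\tau(x)-\tau(y)\|\leq\|x-y\|$; (vi) the range of $\tau$ is a closed convex cone in $\mathcal{X}$; (vii) the orbit $\mathsf{S}\cdot x$ is compact.
   Context: A Euclidean space is a finite-dimensional real inner product space; inner products are written $\langle\cdot,\cdot\rangle$ and norms $\|\cdot\|$. Let $\mathfrak{H}$ and $\mathcal{X}$ be Euclidean spaces, let $\mathsf{S}$ be a group acting on $\mathcal{X}$ by linear isometries, let $\gamma\colon\mathfrak{H}\to\mathcal{X}$, and let $(\Lambda_a)_{a\in\mathcal{A}}$ be a family of linear operators from $\mathcal{X}$ to $\mathfrak{H}$. The orbit of $x$ is $\mathsf{S}\cdot x=\{s\cdot x: s\in\mathsf{S}\}$; a map $f$ on $\mathcal{X}$ is $\mathsf{S}$-invariant if $f(s\cdot x)=f(x)$ for all $s,x$. The tuple is a spectral decomposition system for $\mathfrak{H}$ if: [A] every $\Lambda_a$ is an isometry; [B] there exists an $\mathsf{S}$-invariant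 $\tau\colon\mathcal{X}\to\mathcal{X}$ with $\tau(x)\in\mathsf{S}\cdot x$ for all $x$ and $\gamma\circ\Lambda_a=\tau$ for all $a$; [C] for every $X\in\mathfrak{H}$ there is $a$ with $X=\Lambda_a\gamma(X)$; [D] $\langle X,Y\rangle\leq\langle\gamma(X),\gamma(Y)\rangle$ for all $X,Y\in\mathfrak{H}$. The map $\tau$ in [B] is the spectral-induced ordering mapping. *)

theory Defs
  imports "HOL-Analysis.Analysis" "HOL-Algebra.Group"
begin

definition isometric_linear_action :: "('g, 'b) monoid_scheme \<Rightarrow> ('g \<Rightarrow> 'x::euclidean_space \<Rightarrow> 'x) \<Rightarrow> bool" where
  "isometric_linear_action G act \<longleftrightarrow>
     group G \<and>
     (\<forall>s\<in>carrier G. linear (act s) \<and> (\<forall>x. norm (act s x) = norm x)) \<and>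
     (\<forall>x. act \<one>\<^bsub>G\<^esub> x = x) \<and>
     (\<forall>s\<in>carrier G. \<forall>t\<in>carrier G. \<forall>x. act (s \<otimes>\<^bsub>G\<^esub> t) x = act s (act t x))"

definition orbit :: "('g, 'b) monoid_scheme \<Rightarrow> ('g \<Rightarrow> 'x \<Rightarrow> 'x) \<Rightarrow> 'x \<Rightarrow> 'x set" where
  "orbit G act x = (\<lambda>s. act s x) ` carrier G"

definition S_invariant :: "('g, 'b) monoid_scheme \<Rightarrow> ('g \<Rightarrow> 'x \<Rightarrow> 'x) \<Rightarrow> ('x \<Rightarrow> 'c) \<Rightarrow> bool" where
  "S_invariant G act f \<longleftrightarrow> (\<forall>s\<in>carrier G. \<forall>x. f (act s x) = f x)"

definition spectral_ordering_map ::
  "('g, 'b) monoid_scheme \<Rightarrow> ('g \<Rightarrow> 'x::euclidean_space \<Rightarrow> 'x) \<Rightarrow> ('h::euclidean_space \<Rightarrow> 'x)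
   \<Rightarrow> ('a \<Rightarrow> 'x \<Rightarrow> 'h) \<Rightarrow> 'a set \<Rightarrow> ('x \<Rightarrow> 'x) \<Rightarrow> bool" where
  "spectral_ordering_map G act \<gamma> \<Lambda> A \<tau> \<longleftrightarrow>
     S_invariant G act \<tau> \<and> (\<forall>x. \<tau> x \<in> orbit G act x) \<and> (\<forall>a\<in>A. \<gamma> \<circ> \<Lambda> a = \<tau>)"

definition spectral_decomposition_system ::
  "('g, 'b) monoid_scheme \<Rightarrow> ('g \<Rightarrow> 'x::euclidean_space \<Rightarrow> 'x) \<Rightarrow> ('h::euclidean_space \<Rightarrow> 'x)
   \<Rightarrow> ('a \<Rightarrow> 'x \<Rightarrow> 'h) \<Rightarrow> 'a set \<Rightarrow> bool" where
  "spectral_decomposition_system G act \<gamma> \<Lambda> A \<longleftrightarrow>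
     isometric_linear_action G act \<and>
     (\<forall>a\<in>A. linear (\<Lambda> a) \<and> (\<forall>x. norm (\<Lambda> a x) = norm x)) \<and>
     (\<exists>\<tau>. spectral_ordering_map G act \<gamma> \<Lambda> A \<tau>) \<and>
     (\<forall>X. \<exists>a\<in>A. X = \<Lambda> a (\<gamma> X)) \<and>
     (\<forall>X Y. X \<bullet> Y \<le> \<gamma> X \<bullet> \<gamma> Y)"

end

theory Submission
  imports Defs
begin

text \<open>
  Everything follows from two facts about \<open>\<tau>\<close>: it maps each point into its own orbit and is
  constant on orbits, and by [A], [B] and [D] it dominates the inner product,
  \<open>x \<bullet> y \<le> \<Lambda>\<^sub>a x \<bullet> \<Lambda>\<^sub>a y \<le> \<gamma> (\<Lambda>\<^sub>a x) \<bullet> \<gamma> (\<Lambda>\<^sub>a y) = \<tau> x \<bullet> \<tau> y\<close>.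
  As \<open>\<tau>\<close> also preserves norms, expanding \<open>norm (\<tau> x - \<tau> y)\<^sup>2\<close> makes it nonexpansive, and the
  same inequality for the pair \<open>(w, \<tau> u)\<close> shows that its range is the intersection of the half-spaces
  \<open>{z. 0 \<le> (\<tau> w - w) \<bullet> z}\<close>. Orbits are exactly the fibres of the continuous map \<open>\<tau>\<close>, hence
  closed, and they lie on spheres, hence compact.
\<close>

lemma linear_isometry_inner:
  fixes f :: "'a::real_inner \<Rightarrow> 'b::real_inner"
  assumes "linear f" and "\<And>x. norm (f x) = norm x"
  shows "f x \<bullet> f y = x \<bullet> y"
  using assms by (simp add: dot_norm_neg linear_diff [symmetric])

lemma nonexpansive_if_inner_le:
  fixes f :: "'a::real_inner \<Rightarrow> 'a"
  assumes norm_eq: "\<And>x. norm (f x) = norm x"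
    and inner_le: "\<And>x y. x \<bullet> y \<le> f x \<bullet> f y"
  shows "norm (f x - f y) \<le> norm (x - y)"
proof (rule power2_le_imp_le)
  show "(norm (f x - f y))\<^sup>2 \<le> (norm (x - y))\<^sup>2"
    using inner_le [of x y] dot_norm_neg [of x y] dot_norm_neg [of "f x" "f y"] norm_eq
    by simp
qed simp

lemma range_eq_Inter_halfspaces_if_inner_le:
  fixes f :: "'a::real_inner \<Rightarrow> 'a"
  assumes norm_eq: "\<And>x. norm (f x) = norm x"
    and idem: "\<And>x. f (f x) = f x"
    and inner_le: "\<And>x y. x \<bullet> y \<le> f x \<bullet> f y"
  shows "range f = (\<Inter>w. {z. 0 \<le> (f w - w) \<bullet> z})"
proof
  show "range f \<subseteq> (\<Inter>w. {z. 0 \<le> (f w - w) \<bullet> z})"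
  proof clarify
    fix u w
    show "0 \<le> (f w - w) \<bullet> f u"
      using inner_le [of w "f u"] idem [of u] by (simp add: inner_diff_left)
  qed
next
  show "(\<Inter>w. {z. 0 \<le> (f w - w) \<bullet> z}) \<subseteq> range f"
  proof
    fix z
    assume "z \<in> (\<Inter>w. {z. 0 \<le> (f w - w) \<bullet> z})"
    then have "z \<bullet> z \<le> f z \<bullet> z"
      by (auto simp: inner_diff_left)
    moreover have "f z \<bullet> z \<le> z \<bullet> z"
      using norm_cauchy_schwarz [of "f z" z] norm_eq [of z] by (simp add: dot_square_norm power2_eq_square)
    ultimately have "norm (f z - z) = 0"
      using dot_norm_neg [of "f z" z] norm_eq [of z] by (simp add: dot_square_norm)
    then have "z = f z"
      by simp
    then show "z \<in> range f"
      by (rule range_eqI)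
  qed
qed

lemma closed_convex_cone_range_if_inner_le:
  fixes f :: "'a::real_inner \<Rightarrow> 'a"
  assumes "\<And>x. norm (f x) = norm x" and "\<And>x. f (f x) = f x"
    and "\<And>x y. x \<bullet> y \<le> f x \<bullet> f y"
  shows "closed (range f) \<and> convex (range f) \<and> cone (range f)"
  unfolding range_eq_Inter_halfspaces_if_inner_le [OF assms]
  by (auto intro!: closed_INT convex_INT closed_halfspace_ge convex_halfspace_ge simp: cone_def)

lemma S_invariant_orbit_eq:
  assumes "S_invariant G act f" and "y \<in> orbit G act x"
  shows "f y = f x"
  using assms by (auto simp: S_invariant_def orbit_def)

locale isometric_action =
  fixes G :: "('g, 'b) monoid_scheme" and act :: "'g \<Rightarrow> 'x::euclidean_space \<Rightarrow> 'x"
  assumes isometric_linear_action: "isometric_linear_action G act"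
begin

lemma group: "group G"
  using isometric_linear_action by (simp add: isometric_linear_action_def)

lemma act_one: "act \<one>\<^bsub>G\<^esub> x = x"
  using isometric_linear_action by (simp add: isometric_linear_action_def)

lemma act_mult: "s \<in> carrier G \<Longrightarrow> t \<in> carrier G \<Longrightarrow> act (s \<otimes>\<^bsub>G\<^esub> t) x = act s (act t x)"
  using isometric_linear_action by (simp add: isometric_linear_action_def)

lemma norm_act: "s \<in> carrier G \<Longrightarrow> norm (act s x) = norm x"
  using isometric_linear_action by (simp add: isometric_linear_action_def)

lemma inner_act: "s \<in> carrier G \<Longrightarrow> act s x \<bullet> act s y = x \<bullet> y"
  using isometric_linear_action
  by (intro linear_isometry_inner) (auto simp: isometric_linear_action_def)

lemma S_invariant_norm: "S_invariant G act norm"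
  by (simp add: S_invariant_def norm_act)

lemma orbit_trans: "y \<in> orbit G act x \<Longrightarrow> z \<in> orbit G act y \<Longrightarrow> z \<in> orbit G act x"
  using group.subgroup_self [OF group] subgroup.m_closed
  by (fastforce simp: orbit_def act_mult [symmetric])

lemma orbit_sym:
  assumes "y \<in> orbit G act x"
  shows "x \<in> orbit G act y"
proof -
  obtain s where s: "s \<in> carrier G" "y = act s x"
    using assms by (auto simp: orbit_def)
  then have "act (inv\<^bsub>G\<^esub> s) y = x"
    using group s(1) by (simp add: act_mult [symmetric] act_one group.l_inv)
  then show ?thesis
    using group.inv_closed [OF group s(1)] by (auto simp: orbit_def)
qed

end

locale orbit_selector = isometric_action +
  fixes \<tau> :: "'x::euclidean_space \<Rightarrow> 'x"
  assumes S_invariant: "S_invariant G act \<tau>"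
    and in_orbit: "\<tau> x \<in> orbit G act x"
begin

lemma idem: "\<tau> (\<tau> x) = \<tau> x"
  by (rule S_invariant_orbit_eq [OF S_invariant in_orbit])

lemma norm_eq: "norm (\<tau> x) = norm x"
  by (rule S_invariant_orbit_eq [OF S_invariant_norm in_orbit])

lemma orbit_eq_fibre: "orbit G act x = {z. \<tau> z = \<tau> x}"
proof safe
  show "z \<in> orbit G act x \<Longrightarrow> \<tau> z = \<tau> x" for z
    by (rule S_invariant_orbit_eq [OF S_invariant])
next
  fix z
  assume "\<tau> z = \<tau> x"
  then have "z \<in> orbit G act (\<tau> x)"
    using orbit_sym [OF in_orbit [of z]] by simp
  then show "z \<in> orbit G act x"
    by (rule orbit_trans [OF in_orbit])
qed

lemma compact_orbit:
  assumes "continuous_on UNIV \<tau>"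
  shows "compact (orbit G act x)"
proof -
  have "closed (orbit G act x)"
    using continuous_closed_preimage_constant [OF assms closed_UNIV] by (simp add: orbit_eq_fibre)
  moreover have "orbit G act x \<subseteq> cball 0 (norm x)"
    by (auto simp: orbit_def norm_act)
  ultimately show ?thesis
    by (meson bounded_cball bounded_subset compact_eq_bounded_closed)
qed

lemma inner_attained: "\<exists>s\<in>carrier G. act s x \<bullet> y = \<tau> x \<bullet> \<tau> y"
proof -
  obtain u where u: "u \<in> carrier G" "y = act u (\<tau> y)"
    using orbit_sym [OF in_orbit [of y]] by (auto simp: orbit_def)
  have "act u (\<tau> x) \<in> orbit G act (\<tau> x)"
    using u(1) by (simp add: orbit_def)
  then have "act u (\<tau> x) \<in> orbit G act x"
    by (rule orbit_trans [OF in_orbit])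
  moreover have "act u (\<tau> x) \<bullet> y = \<tau> x \<bullet> \<tau> y"
    using inner_act [OF u(1)] u(2) by metis
  ultimately show ?thesis
    by (auto simp: orbit_def)
qed

end

lemma spectral_ordering_map_inner_le:
  assumes "spectral_decomposition_system G act \<gamma> \<Lambda> A"
    and "spectral_ordering_map G act \<gamma> \<Lambda> A \<tau>"
  shows "x \<bullet> y \<le> \<tau> x \<bullet> \<tau> y"
proof -
  obtain a where a: "a \<in> A" "linear (\<Lambda> a)" "\<And>z. norm (\<Lambda> a z) = norm z"
    using assms(1) unfolding spectral_decomposition_system_def by blast
  have "x \<bullet> y = \<Lambda> a x \<bullet> \<Lambda> a y"
    using linear_isometry_inner [OF a(2,3)] by simp
  also have "\<dots> \<le> \<gamma> (\<Lambda> a x) \<bullet> \<gamma> (\<Lambda> a y)"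
    using assms(1) by (simp add: spectral_decomposition_system_def)
  also have "\<dots> = \<tau> x \<bullet> \<tau> y"
    using assms(2) a(1) by (simp add: spectral_ordering_map_def fun_eq_iff)
  finally show ?thesis .
qed

theorem proposition3p3:
  fixes G :: "('g, 'b) monoid_scheme"
    and act :: "'g \<Rightarrow> 'x::euclidean_space \<Rightarrow> 'x"
    and \<gamma> :: "'h::euclidean_space \<Rightarrow> 'x"
    and \<Lambda> :: "'a \<Rightarrow> 'x \<Rightarrow> 'h"
    and A :: "'a set"
    and \<tau> :: "'x \<Rightarrow> 'x"
    and x y :: 'x
  assumes "spectral_decomposition_system G act \<gamma> \<Lambda> A"
    and "spectral_ordering_map G act \<gamma> \<Lambda> A \<tau>"
  shows "(\<tau> \<circ> \<tau> = \<tau>) \<and>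
         (\<forall>a\<in>A. norm (\<Lambda> a x) = norm x \<and> norm x = norm (\<tau> x)) \<and>
         (x \<bullet> y \<le> \<tau> x \<bullet> \<tau> y) \<and>
         ((\<exists>s\<in>carrier G. act s x \<bullet> y = \<tau> x \<bullet> \<tau> y) \<and>
          (\<forall>s\<in>carrier G. act s x \<bullet> y \<le> \<tau> x \<bullet> \<tau> y)) \<and>
         (norm (\<tau> x - \<tau> y) \<le> norm (x - y)) \<and>
         (closed (range \<tau>) \<and> convex (range \<tau>) \<and> cone (range \<tau>)) \<and>
         compact (orbit G act x)"
proof -
  interpret orbit_selector G act \<tau>
    using assms unfolding spectral_decomposition_system_def spectral_ordering_map_def
    by unfold_locales auto
  have inner_le: "\<And>u v. u \<bullet> v \<le> \<tau> u \<bullet> \<tau> v"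
    using spectral_ordering_map_inner_le [OF assms] .
  have nonexpansive: "\<And>u v. norm (\<tau> u - \<tau> v) \<le> norm (u - v)"
    using nonexpansive_if_inner_le [OF norm_eq inner_le] .
  have "continuous_on UNIV \<tau>"
    using nonexpansive by (intro lipschitz_on_continuous_on [of 1]) (simp add: lipschitz_on_def dist_norm)
  moreover have "\<forall>s\<in>carrier G. act s x \<bullet> y \<le> \<tau> x \<bullet> \<tau> y"
    using inner_le S_invariant by (simp add: S_invariant_def) metis
  moreover have "\<forall>a\<in>A. norm (\<Lambda> a x) = norm x"
    using assms(1) by (simp add: spectral_decomposition_system_def)
  ultimately show ?thesis
    using idem norm_eq inner_le inner_attained nonexpansive compact_orbit
      closed_convex_cone_range_if_inner_le [OF norm_eq idem inner_le]
    by (auto simp: fun_eq_iff)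
qed

end
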